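(* The free energy $\mathcal{F}$ is lower semicontinuous in the weak $L^1$ topology: if $n=(n_A,n_B,n_C)$ and $n_k=(n_{k,A},n_{k,B},n_{k,C})$, $k=1,2,\dots$, are profiles such that for each $\alpha\in\{A,B,C\}$ the sequence $n_{k,\alpha}$ converges weakly in $L^1([0,1])$ to $n_\alpha$, then $\liminf_{k\to\infty}\mathcal{F}(\{n_k\})\ge\mathcal{F}(\{n\})$.
   Context: A profile is a triple $(n_A,n_B,n_C)$ of measurable functions on $[0,1]$ with values in $[0,1]$. A sequence $f_k\in L^1([0,1])$ converges weakly to $f$ if $\int_0^1f_k\phi\,dx\to\int_0^1f\phi\,dx$ for every bounded measurable $\phi$. For $\beta>0$ fixed, $\mathcal{F}(\{n\})=\beta\int_0^1dx\int_x^1dz\,[n_A(x)n_C(z)+n_B(x)n_A(z)+n_C(x)n_B(z)]+\int_0^1\sum_{\alpha}n_\alpha(x)\ln n_\alpha(x)\,dx$ with $0\ln0=0$. *)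

theory Defs
  imports "HOL-Analysis.Analysis"
begin

datatype species = A | B | C

abbreviation I01 :: "real measure" where
  "I01 \<equiv> lebesgue_on {0..1}"

definition profile :: "(species \<Rightarrow> real \<Rightarrow> real) \<Rightarrow> bool" where
  "profile n \<longleftrightarrow> (\<forall>a. n a \<in> borel_measurable I01 \<and> (\<forall>x\<in>{0..1}. 0 \<le> n a x \<and> n a x \<le> 1))"

definition weak_L1_conv :: "(nat \<Rightarrow> real \<Rightarrow> real) \<Rightarrow> (real \<Rightarrow> real) \<Rightarrow> bool" where
  "weak_L1_conv fk f \<longleftrightarrow>
     (\<forall>\<phi>. \<phi> \<in> borel_measurable I01 \<and> (\<exists>M. \<forall>x\<in>{0..1}. \<bar>\<phi> x\<bar> \<le> M) \<longrightarrow>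
        (\<lambda>k. integral\<^sup>L I01 (\<lambda>x. fk k x * \<phi> x)) \<longlonglongrightarrow> integral\<^sup>L I01 (\<lambda>x. f x * \<phi> x))"

text \<open>Free energy. Note ln 0 = 0 in Isabelle, so 0 * ln 0 = 0 as required.\<close>
definition free_energy :: "real \<Rightarrow> (species \<Rightarrow> real \<Rightarrow> real) \<Rightarrow> real" where
  "free_energy \<beta> n =
     \<beta> * (\<integral>x. (\<integral>z. indicator {x..1} z *
              (n A x * n C z + n B x * n A z + n C x * n B z) \<partial>I01) \<partial>I01)
     + (\<integral>x. (\<Sum>a\<in>UNIV. n a x * ln (n a x)) \<partial>I01)"

end

theory Submission
  imports Defs
begin

text \<open>
  Write \<open>G(x) = \<integral>\<^sub>x\<^sup>1 n(z) dz\<close>; the interaction part of the free energy is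
  \<open>\<integral> n\<^sub>A G\<^sub>C + \<integral> n\<^sub>B G\<^sub>A + \<integral> n\<^sub>C G\<^sub>B\<close>. Testing weak convergence against the indicator of
  \<open>[x,1]\<close> gives \<open>G\<^sub>k \<rightarrow> G\<close> pointwise, and the integral of a bounded weakly convergent sequence
  times a bounded pointwise convergent one converges.
  The entropy part is lower semicontinuous by convexity of \<open>t ln t\<close>: the tangent inequality
  \<open>t ln t \<ge> t (ln s + 1) - s\<close> at \<open>s = n + \<epsilon>\<close> bounds the entropy of \<open>n\<^sub>k\<close> from below by the integral
  of \<open>n\<^sub>k\<close> against the bounded test function \<open>ln (n + \<epsilon>) + 1\<close>, which converges.
\<close>

definition unit_valued :: "(real \<Rightarrow> real) \<Rightarrow> bool" where
  "unit_valued f \<longleftrightarrow> f \<in> borel_measurable I01 \<and> (\<forall>x\<in>{0..1}. 0 \<le> f x \<and> f x \<le> 1)"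

definition tail_integral :: "(real \<Rightarrow> real) \<Rightarrow> real \<Rightarrow> real" where
  "tail_integral f x = (\<integral>z. indicator {x..1} z * f z \<partial>I01)"

definition interaction :: "(species \<Rightarrow> real \<Rightarrow> real) \<Rightarrow> real" where
  "interaction n =
     (\<integral>x. n A x * tail_integral (n C) x \<partial>I01) + (\<integral>x. n B x * tail_integral (n A) x \<partial>I01)
     + (\<integral>x. n C x * tail_integral (n B) x \<partial>I01)"

definition entropy :: "(real \<Rightarrow> real) \<Rightarrow> real" where
  "entropy f = (\<integral>x. f x * ln (f x) \<partial>I01)"

text \<open>\<open>t (ln s + 1) - s\<close> is the tangent of \<open>t ln t\<close> at \<open>t = s\<close>, here taken at \<open>s = f x + \<epsilon>\<close>.\<close>

definition tangent_integral :: "(real \<Rightarrow> real) \<Rightarrow> real \<Rightarrow> (real \<Rightarrow> real) \<Rightarrow> real" where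
  "tangent_integral f \<epsilon> g = (\<integral>x. g x * (ln (f x + \<epsilon>) + 1) - (f x + \<epsilon>) \<partial>I01)"

lemma profile_unit_valued: "profile n \<Longrightarrow> unit_valued (n a)"
  unfolding profile_def unit_valued_def by auto

lemma borel_measurable_unit_valued: "unit_valued f \<Longrightarrow> f \<in> borel_measurable I01"
  unfolding unit_valued_def by simp

lemma unit_valuedD:
  assumes "unit_valued f" "x \<in> {0..1}"
  shows "0 \<le> f x" "f x \<le> 1"
  using assms unfolding unit_valued_def by auto

subsection \<open>Integration on the unit interval\<close>

lemma finite_measure_I01: "finite_measure I01"
  by (rule finite_measure_lebesgue_on) (rule lmeasurable_interval)

lemma measure_I01: "measure I01 {0..1} = 1"
  by (simp add: measure_restrict_space)

lemma integrable_I01_bounded: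
  fixes M :: real
  assumes "f \<in> borel_measurable I01" "\<forall>x\<in>{0..1}. \<bar>f x\<bar> \<le> M"
  shows "integrable I01 f"
  by (rule finite_measure.integrable_const_bound[OF finite_measure_I01, where B=M])
    (use assms in auto)

lemma integrable_I01_unit_valued:
  assumes "unit_valued f"
  shows "integrable I01 f"
proof (rule integrable_I01_bounded)
  show "f \<in> borel_measurable I01"
    using assms by (rule borel_measurable_unit_valued)
  show "\<forall>x\<in>{0..1}. \<bar>f x\<bar> \<le> 1"
    using unit_valuedD[OF assms] by auto
qed

lemma borel_measurable_I01_borel:
  "(f :: real \<Rightarrow> real) \<in> borel_measurable borel \<Longrightarrow> f \<in> borel_measurable I01"
  using measurable_comp[OF id_borel_measurable_lebesgue_on, of f] by (simp only: comp_id)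

lemma bounded_mult_bounded:
  fixes a b P Q :: real
  assumes "\<bar>a\<bar> \<le> P" "\<bar>b\<bar> \<le> Q"
  shows "\<bar>a * b\<bar> \<le> P * Q"
  unfolding abs_mult using assms by (intro mult_mono') simp_all

lemma integrable_unit_valued_times_bounded:
  fixes M :: real
  assumes "unit_valued g" "h \<in> borel_measurable I01" "\<And>x. x \<in> {0..1} \<Longrightarrow> \<bar>h x\<bar> \<le> M"
  shows "integrable I01 (\<lambda>x. g x * h x)"
proof (rule integrable_I01_bounded[where M="1 * M"])
  show "(\<lambda>x. g x * h x) \<in> borel_measurable I01"
    using borel_measurable_unit_valued[OF assms(1)] assms(2) by (rule borel_measurable_times)
  show "\<forall>x\<in>{0..1}. \<bar>g x * h x\<bar> \<le> 1 * M"
  proof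
    fix x :: real assume x: "x \<in> {0..1}"
    then have "\<bar>g x\<bar> \<le> 1" using unit_valuedD[OF assms(1)] by auto
    then show "\<bar>g x * h x\<bar> \<le> 1 * M" using assms(3)[OF x] by (rule bounded_mult_bounded)
  qed
qed

lemma weak_L1_conv_mult_tendsto:
  fixes P Q :: real
  assumes w: "weak_L1_conv p p0"
    and p: "\<And>k. p k \<in> borel_measurable I01" "\<And>k x. x \<in> {0..1} \<Longrightarrow> \<bar>p k x\<bar> \<le> P"
    and q: "\<And>k. q k \<in> borel_measurable I01" "\<And>k x. x \<in> {0..1} \<Longrightarrow> \<bar>q k x\<bar> \<le> Q"
    and q0: "q0 \<in> borel_measurable I01" "\<And>x. x \<in> {0..1} \<Longrightarrow> \<bar>q0 x\<bar> \<le> Q"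
    and lim: "\<And>x. x \<in> {0..1} \<Longrightarrow> (\<lambda>k. q k x) \<longlonglongrightarrow> q0 x"
  shows "(\<lambda>k. \<integral>x. p k x * q k x \<partial>I01) \<longlonglongrightarrow> (\<integral>x. p0 x * q0 x \<partial>I01)"
proof -
  note [measurable] = p(1) q(1) q0(1)
  have weak: "(\<lambda>k. \<integral>x. p k x * q0 x \<partial>I01) \<longlonglongrightarrow> (\<integral>x. p0 x * q0 x \<partial>I01)"
    using w q0 unfolding weak_L1_conv_def by blast
  have bound: "\<bar>p k x * (q k x - q0 x)\<bar> \<le> P * (2 * Q)" if x: "x \<in> {0..1}" for k x
  proof (rule bounded_mult_bounded)
    show "\<bar>p k x\<bar> \<le> P" using p(2)[OF x] .
    show "\<bar>q k x - q0 x\<bar> \<le> 2 * Q" using q(2)[OF x, of k] q0(2)[OF x] by linarith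
  qed
  have strong: "(\<lambda>k. \<integral>x. p k x * (q k x - q0 x) \<partial>I01) \<longlonglongrightarrow> (\<integral>x. 0 \<partial>I01)"
  proof (rule integral_dominated_convergence[where w="\<lambda>_. P * (2 * Q)"])
    show "(\<lambda>x. p k x * (q k x - q0 x)) \<in> borel_measurable I01" for k
      by measurable
    show "AE x in I01. norm (p k x * (q k x - q0 x)) \<le> P * (2 * Q)" for k
      using bound by (intro AE_I2) simp
    show "AE x in I01. (\<lambda>k. p k x * (q k x - q0 x)) \<longlonglongrightarrow> 0"
    proof (rule AE_I2)
      fix x assume "x \<in> space I01"
      then have x: "x \<in> {0..1}" by simp
      have "(\<lambda>k. q k x - q0 x) \<longlonglongrightarrow> 0"
        using lim[OF x] by (simp add: LIM_zero)
      then show "(\<lambda>k. p k x * (q k x - q0 x)) \<longlonglongrightarrow> 0"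
      proof (rule tendsto_0_le[where K=P], intro always_eventually allI)
        fix k
        show "norm (p k x * (q k x - q0 x)) \<le> norm (q k x - q0 x) * P"
          using p(2)[OF x, of k] by (simp add: abs_mult mult.commute[of "\<bar>p k x\<bar>"] mult_left_mono)
      qed
    qed
    show "integrable I01 (\<lambda>_. P * (2 * Q))"
      by (rule finite_measure.integrable_const[OF finite_measure_I01])
    show "(\<lambda>x. 0::real) \<in> borel_measurable I01"
      by simp
  qed
  have split: "(\<integral>x. p k x * q k x \<partial>I01)
      = (\<integral>x. p k x * q0 x \<partial>I01) + (\<integral>x. p k x * (q k x - q0 x) \<partial>I01)" for k
  proof -
    have "integrable I01 (\<lambda>x. p k x * q0 x)"
      using p(2) q0(2) by (intro integrable_I01_bounded[where M="P * Q"] ballI bounded_mult_bounded) measurable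
    moreover have "integrable I01 (\<lambda>x. p k x * (q k x - q0 x))"
      using bound by (intro integrable_I01_bounded[where M="P * (2 * Q)"] ballI) measurable
    ultimately have "(\<integral>x. p k x * q0 x + p k x * (q k x - q0 x) \<partial>I01)
        = (\<integral>x. p k x * q0 x \<partial>I01) + (\<integral>x. p k x * (q k x - q0 x) \<partial>I01)"
      by (rule Bochner_Integration.integral_add)
    then show ?thesis
      by (simp add: right_diff_distrib)
  qed
  show ?thesis
    using tendsto_add[OF weak strong] by (simp only: split integral_zero add_0_right)
qed


subsection \<open>Tail integrals\<close>

lemma borel_measurable_indicator_I01: "(indicator {x..1} :: real \<Rightarrow> real) \<in> borel_measurable I01"
  by (rule borel_measurable_I01_borel, rule borel_measurable_indicator) simp

lemma integrable_tail_integrand: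
  assumes "unit_valued f"
  shows "integrable I01 (\<lambda>z. indicator {x..1} z * f z)"
proof (rule integrable_I01_bounded[where M=1])
  show "(\<lambda>z. indicator {x..1} z * f z) \<in> borel_measurable I01"
    using assms borel_measurable_indicator_I01 unfolding unit_valued_def
    by (intro borel_measurable_times) auto
  show "\<forall>z\<in>{0..1}. \<bar>indicator {x..1} z * f z\<bar> \<le> 1"
    using assms unfolding unit_valued_def by (auto simp: indicator_def)
qed

lemma tail_integral_le:
  assumes "unit_valued f" "\<And>z. z \<in> {0..1} \<Longrightarrow> indicator {y..1} z \<le> (g z :: real)"
    and "integrable I01 (\<lambda>z. g z * f z)"
  shows "tail_integral f y \<le> (\<integral>z. g z * f z \<partial>I01)"
  unfolding tail_integral_def
proof (rule integral_mono[OF integrable_tail_integrand[OF assms(1)] assms(3)])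
  fix z assume "z \<in> space I01"
  then show "indicator {y..1} z * f z \<le> g z * f z"
    using assms(1,2) unfolding unit_valued_def by (auto intro: mult_right_mono)
qed

lemma tail_integral_antimono:
  assumes "unit_valued f" "x \<le> y"
  shows "tail_integral f y \<le> tail_integral f x"
  unfolding tail_integral_def[of f x]
  using assms by (intro tail_integral_le integrable_tail_integrand) (auto simp: indicator_def)

lemma tail_integral_bounds:
  assumes "unit_valued f"
  shows "0 \<le> tail_integral f x" "tail_integral f x \<le> 1"
proof -
  show "0 \<le> tail_integral f x"
    unfolding tail_integral_def using assms unfolding unit_valued_def
    by (intro Bochner_Integration.integral_nonneg) (auto simp: indicator_def)
  have "tail_integral f x \<le> (\<integral>z. 1 * f z \<partial>I01)"
    using assms integrable_I01_unit_valued[OF assms]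
    by (intro tail_integral_le) (auto simp: indicator_def)
  also have "\<dots> \<le> (\<integral>z. 1 \<partial>I01)"
    using assms integrable_I01_unit_valued[OF assms] unfolding unit_valued_def
    by (intro integral_mono) auto
  finally show "tail_integral f x \<le> 1"
    using measure_I01 by simp
qed

lemma borel_measurable_tail_integral:
  assumes "unit_valued f"
  shows "tail_integral f \<in> borel_measurable I01"
proof -
  have "mono (\<lambda>x. - tail_integral f x)"
    using tail_integral_antimono[OF assms] by (auto simp: mono_def)
  then have "(\<lambda>x. - (- tail_integral f x)) \<in> borel_measurable borel"
    by (intro borel_measurable_uminus borel_measurable_mono)
  then show ?thesis
    by (intro borel_measurable_I01_borel) simp
qed

lemma weak_L1_conv_tail_integral:
  assumes "weak_L1_conv fk f"
  shows "(\<lambda>k. tail_integral (fk k) x) \<longlonglongrightarrow> tail_integral f x"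
proof -
  have "\<bar>indicator {x..1} z\<bar> \<le> (1::real)" for z
    by (simp add: indicator_def)
  then have "(\<lambda>k. \<integral>z. fk k z * indicator {x..1} z \<partial>I01) \<longlonglongrightarrow> (\<integral>z. f z * indicator {x..1} z \<partial>I01)"
    using assms borel_measurable_indicator_I01 unfolding weak_L1_conv_def by blast
  then show ?thesis
    unfolding tail_integral_def by (simp add: mult.commute)
qed

subsection \<open>The interaction energy\<close>

lemma integrable_times_tail_integral:
  assumes "unit_valued p" "unit_valued q"
  shows "integrable I01 (\<lambda>x. p x * tail_integral q x)"
proof (rule integrable_unit_valued_times_bounded[where M=1])
  show "\<bar>tail_integral q x\<bar> \<le> 1" for x
    using tail_integral_bounds[OF assms(2), of x] by simp
qed (simp_all add: assms borel_measurable_tail_integral)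

lemma weak_L1_conv_times_tail_integral:
  assumes "\<And>k. unit_valued (p k)" "\<And>k. unit_valued (q k)" "unit_valued q0"
    and "weak_L1_conv p p0" "weak_L1_conv q q0"
  shows "(\<lambda>k. \<integral>x. p k x * tail_integral (q k) x \<partial>I01) \<longlonglongrightarrow> (\<integral>x. p0 x * tail_integral q0 x \<partial>I01)"
proof (rule weak_L1_conv_mult_tendsto[where P=1 and Q=1])
  show "\<bar>p k x\<bar> \<le> 1" if "x \<in> {0..1}" for k x
    using assms(1)[of k] that unfolding unit_valued_def by auto
  show "\<bar>tail_integral (q k) x\<bar> \<le> 1" for k x
    using tail_integral_bounds[OF assms(2)[of k]] by simp
  show "\<bar>tail_integral q0 x\<bar> \<le> 1" for x
    using tail_integral_bounds[OF assms(3)] by simp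
qed (use assms weak_L1_conv_tail_integral borel_measurable_tail_integral in
      \<open>auto simp: unit_valued_def\<close>)

lemma interaction_tendsto:
  assumes "\<And>k. profile (nk k)" "profile n" "\<And>a. weak_L1_conv (\<lambda>k. nk k a) (n a)"
  shows "(\<lambda>k. interaction (nk k)) \<longlonglongrightarrow> interaction n"
  unfolding interaction_def
  using assms by (intro tendsto_add weak_L1_conv_times_tail_integral profile_unit_valued)

subsection \<open>Entropy\<close>

lemma abs_mult_ln_le_one:
  fixes t :: real
  assumes "0 \<le> t" "t \<le> 1"
  shows "\<bar>t * ln t\<bar> \<le> 1"
proof (cases "t = 0")
  case False
  with assms have t: "0 < t" by simp
  have "t * ln t \<le> 0"
    using assms t by (simp add: mult_nonneg_nonpos)
  moreover have "- ln t \<le> 1 / t - 1"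
    using ln_le_minus_one[of "1 / t"] t by (simp add: ln_div)
  then have "t * (- ln t) \<le> t * (1 / t - 1)"
    using t by (intro mult_left_mono) auto
  then have "- (t * ln t) \<le> 1 - t"
    using t by (simp add: algebra_simps)
  ultimately show ?thesis
    using assms by linarith
qed simp

lemma integrable_entropy: "unit_valued f \<Longrightarrow> integrable I01 (\<lambda>x. f x * ln (f x))"
  unfolding unit_valued_def by (intro integrable_I01_bounded[where M=1]) (auto intro: abs_mult_ln_le_one)

lemma mult_ln_ge_tangent:
  fixes s t :: real
  assumes "0 \<le> t" "0 < s"
  shows "t * (ln s + 1) - s \<le> t * ln t"
proof (cases "t = 0")
  case False
  with assms have t: "0 < t" by simp
  have "ln s - ln t \<le> s / t - 1"
    using ln_le_minus_one[of "s / t"] t assms(2) by (simp add: ln_div)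
  then have "t * (ln s - ln t) \<le> t * (s / t - 1)"
    using t by (intro mult_left_mono) auto
  then show ?thesis
    using t by (simp add: algebra_simps)
qed (use assms in simp)

lemma abs_ln_add_plus_one_le:
  fixes t \<epsilon> :: real
  assumes "0 \<le> t" "t \<le> 1" "0 < \<epsilon>"
  shows "\<bar>ln (t + \<epsilon>) + 1\<bar> \<le> \<bar>ln \<epsilon>\<bar> + \<epsilon> + 1"
proof -
  have "ln \<epsilon> \<le> ln (t + \<epsilon>)"
    using assms by simp
  moreover have "ln (t + \<epsilon>) \<le> t + \<epsilon> - 1"
    using assms by (intro ln_le_minus_one) simp
  ultimately show ?thesis
    using assms abs_ge_self[of "ln \<epsilon>"] abs_ge_minus_self[of "ln \<epsilon>"]
    unfolding abs_le_iff by linarith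
qed

lemma integrable_tangent_integrand:
  assumes "unit_valued g" "unit_valued f" "0 < \<epsilon>"
  shows "integrable I01 (\<lambda>x. g x * (ln (f x + \<epsilon>) + 1) - (f x + \<epsilon>))"
proof (intro Bochner_Integration.integrable_diff Bochner_Integration.integrable_add
    integrable_unit_valued_times_bounded[where M="\<bar>ln \<epsilon>\<bar> + \<epsilon> + 1"])
  have [measurable]: "f \<in> borel_measurable I01"
    using assms(2) by (rule borel_measurable_unit_valued)
  show "(\<lambda>x. ln (f x + \<epsilon>) + 1) \<in> borel_measurable I01"
    by measurable
  show "\<bar>ln (f x + \<epsilon>) + 1\<bar> \<le> \<bar>ln \<epsilon>\<bar> + \<epsilon> + 1" if "x \<in> {0..1}" for x
    using unit_valuedD[OF assms(2) that] assms(3) by (rule abs_ln_add_plus_one_le)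
qed (simp_all add: assms integrable_I01_unit_valued)

lemma entropy_ge_tangent_integral:
  assumes "unit_valued g" "unit_valued f" "0 < \<epsilon>"
  shows "tangent_integral f \<epsilon> g \<le> entropy g"
  unfolding tangent_integral_def entropy_def
proof (rule integral_mono[OF integrable_tangent_integrand[OF assms] integrable_entropy[OF assms(1)]])
  fix x assume "x \<in> space I01"
  then have "x \<in> {0..1}" by simp
  then show "g x * (ln (f x + \<epsilon>) + 1) - (f x + \<epsilon>) \<le> g x * ln (g x)"
    using unit_valuedD[OF assms(1)] unit_valuedD[OF assms(2)] assms(3)
    by (intro mult_ln_ge_tangent) (auto intro: add_nonneg_pos)
qed

lemma entropy_le_tangent_integral:
  assumes "unit_valued f" "0 < \<epsilon>"
  shows "entropy f - \<epsilon> \<le> tangent_integral f \<epsilon> f"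
proof -
  have "entropy f - \<epsilon> = (\<integral>x. f x * ln (f x) - \<epsilon> \<partial>I01)"
    unfolding entropy_def using integrable_entropy[OF assms(1)] measure_I01 by simp
  also have "\<dots> \<le> (\<integral>x. f x * (ln (f x + \<epsilon>) + 1) - (f x + \<epsilon>) \<partial>I01)"
  proof (rule integral_mono)
    show "integrable I01 (\<lambda>x. f x * ln (f x) - \<epsilon>)"
      using integrable_entropy[OF assms(1)] by simp
    show "integrable I01 (\<lambda>x. f x * (ln (f x + \<epsilon>) + 1) - (f x + \<epsilon>))"
      using assms by (intro integrable_tangent_integrand)
    fix x assume "x \<in> space I01"
    then have f: "0 \<le> f x"
      using assms(1) unfolding unit_valued_def by simp
    have "f x * ln (f x) \<le> f x * ln (f x + \<epsilon>)"
    proof (cases "f x = 0")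
      case False
      with f assms(2) show ?thesis by (intro mult_left_mono) simp_all
    qed simp
    then show "f x * ln (f x) - \<epsilon> \<le> f x * (ln (f x + \<epsilon>) + 1) - (f x + \<epsilon>)"
      by (simp add: algebra_simps)
  qed
  finally show ?thesis
    unfolding tangent_integral_def .
qed

lemma weak_L1_conv_tangent_integral:
  assumes "weak_L1_conv fk f" "\<And>k. unit_valued (fk k)" "unit_valued f" "0 < \<epsilon>"
  shows "(\<lambda>k. tangent_integral f \<epsilon> (fk k)) \<longlonglongrightarrow> tangent_integral f \<epsilon> f"
proof -
  let ?h = "\<lambda>x. ln (f x + \<epsilon>) + 1"
  have [measurable]: "f \<in> borel_measurable I01"
    using assms(3) by (rule borel_measurable_unit_valued)
  have h_measurable: "?h \<in> borel_measurable I01"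
    by measurable
  have h_bounded: "\<bar>?h x\<bar> \<le> \<bar>ln \<epsilon>\<bar> + \<epsilon> + 1" if "x \<in> {0..1}" for x
    using unit_valuedD[OF assms(3) that] assms(4) by (rule abs_ln_add_plus_one_le)
  then have "\<exists>M. \<forall>x\<in>{0..1}. \<bar>?h x\<bar> \<le> M"
    by blast
  then have "(\<lambda>k. \<integral>x. fk k x * ?h x \<partial>I01) \<longlonglongrightarrow> (\<integral>x. f x * ?h x \<partial>I01)"
    using assms(1) h_measurable unfolding weak_L1_conv_def by blast
  moreover have split: "(\<integral>x. g x * ?h x - (f x + \<epsilon>) \<partial>I01)
      = (\<integral>x. g x * ?h x \<partial>I01) - (\<integral>x. f x + \<epsilon> \<partial>I01)" if "unit_valued g" for g
    using integrable_unit_valued_times_bounded[OF that h_measurable h_bounded]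
      integrable_I01_unit_valued[OF assms(3)] by simp
  ultimately show ?thesis
    unfolding tangent_integral_def split[OF assms(2)] split[OF assms(3)]
    by (intro tendsto_diff tendsto_const)
qed

lemma entropy_eventually_gt:
  assumes "weak_L1_conv fk f" "\<And>k. unit_valued (fk k)" "unit_valued f" "0 < \<epsilon>"
  shows "eventually (\<lambda>k. entropy f - \<epsilon> < entropy (fk k)) sequentially"
proof -
  have "(\<lambda>k. tangent_integral f (\<epsilon>/2) (fk k)) \<longlonglongrightarrow> tangent_integral f (\<epsilon>/2) f"
    using assms by (intro weak_L1_conv_tangent_integral) auto
  then have "eventually (\<lambda>k. tangent_integral f (\<epsilon>/2) f - \<epsilon>/2 < tangent_integral f (\<epsilon>/2) (fk k))
      sequentially"
    by (rule order_tendstoD(1)) (use assms(4) in simp)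
  then show ?thesis
  proof (rule eventually_mono)
    fix k
    assume "tangent_integral f (\<epsilon>/2) f - \<epsilon>/2 < tangent_integral f (\<epsilon>/2) (fk k)"
    moreover have "entropy f - \<epsilon>/2 \<le> tangent_integral f (\<epsilon>/2) f"
      using assms(3,4) by (intro entropy_le_tangent_integral) auto
    moreover have "tangent_integral f (\<epsilon>/2) (fk k) \<le> entropy (fk k)"
      using assms(2-4) by (intro entropy_ge_tangent_integral) auto
    ultimately show "entropy f - \<epsilon> < entropy (fk k)"
      by linarith
  qed
qed

subsection \<open>The free energy\<close>

lemma inner_integral_eq_tail_integrals:
  assumes "profile n"
  shows "(\<integral>z. indicator {x..1} z * (n A x * n C z + n B x * n A z + n C x * n B z) \<partial>I01)
    = n A x * tail_integral (n C) x + n B x * tail_integral (n A) x + n C x * tail_integral (n B) x"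
proof -
  note integrable = integrable_tail_integrand[OF profile_unit_valued[OF assms]]
  have "(\<integral>z. indicator {x..1} z * (n A x * n C z + n B x * n A z + n C x * n B z) \<partial>I01)
    = (\<integral>z. n A x * (indicator {x..1} z * n C z) + n B x * (indicator {x..1} z * n A z)
          + n C x * (indicator {x..1} z * n B z) \<partial>I01)"
    by (simp add: algebra_simps)
  also have "\<dots> = n A x * tail_integral (n C) x + n B x * tail_integral (n A) x
      + n C x * tail_integral (n B) x"
    using integrable unfolding tail_integral_def by simp
  finally show ?thesis .
qed

lemma free_energy_eq_interaction_entropy:
  assumes "profile n"
  shows "free_energy \<beta> n = \<beta> * interaction n + (entropy (n A) + entropy (n B) + entropy (n C))"
proof -
  have unit: "unit_valued (n a)" for a
    using assms by (rule profile_unit_valued)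
  have "(\<integral>x. (\<integral>z. indicator {x..1} z * (n A x * n C z + n B x * n A z + n C x * n B z) \<partial>I01) \<partial>I01)
    = (\<integral>x. n A x * tail_integral (n C) x + n B x * tail_integral (n A) x
          + n C x * tail_integral (n B) x \<partial>I01)"
    by (simp add: inner_integral_eq_tail_integrals[OF assms])
  also have "\<dots> = interaction n"
    unfolding interaction_def using integrable_times_tail_integral[OF unit unit] by simp
  finally have interaction: "(\<integral>x. (\<integral>z. indicator {x..1} z
      * (n A x * n C z + n B x * n A z + n C x * n B z) \<partial>I01) \<partial>I01) = interaction n" .
  have species_UNIV: "(UNIV :: species set) = {A, B, C}"
    using species.exhaust by auto
  have entropy: "(\<integral>x. (\<Sum>a\<in>UNIV. n a x * ln (n a x)) \<partial>I01)
      = entropy (n A) + entropy (n B) + entropy (n C)"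
    unfolding species_UNIV entropy_def using integrable_entropy[OF unit] by (simp add: add.assoc)
  show ?thesis
    unfolding free_energy_def interaction entropy ..
qed

lemma ereal_le_liminf_of_eventually_gt:
  fixes x :: "nat \<Rightarrow> real"
  assumes "\<And>\<delta>. 0 < \<delta> \<Longrightarrow> eventually (\<lambda>k. c - \<delta> < x k) sequentially"
  shows "ereal c \<le> liminf (\<lambda>k. ereal (x k))"
  unfolding le_Liminf_iff
proof (intro allI impI)
  fix y assume y: "y < ereal c"
  show "eventually (\<lambda>k. y < ereal (x k)) sequentially"
  proof (cases y)
    case (real r)
    with y have "eventually (\<lambda>k. c - (c - r) < x k) sequentially"
      by (intro assms) simp
    then show ?thesis
      by eventually_elim (simp add: real)
  qed (use y in simp_all)
qed

theorem lemma10p1: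
  fixes \<beta> :: real and n :: "species \<Rightarrow> real \<Rightarrow> real"
    and nk :: "nat \<Rightarrow> species \<Rightarrow> real \<Rightarrow> real"
  assumes "\<beta> > 0"
    and "profile n"
    and "\<And>k. profile (nk k)"
    and "\<And>a. weak_L1_conv (\<lambda>k. nk k a) (n a)"
  shows "liminf (\<lambda>k. ereal (free_energy \<beta> (nk k))) \<ge> ereal (free_energy \<beta> n)"
  unfolding free_energy_eq_interaction_entropy[OF assms(2)] free_energy_eq_interaction_entropy[OF assms(3)]
proof (rule ereal_le_liminf_of_eventually_gt)
  fix \<delta> :: real assume "0 < \<delta>"
  have "(\<lambda>k. \<beta> * interaction (nk k)) \<longlonglongrightarrow> \<beta> * interaction n"
    using assms(2-4) by (intro tendsto_mult_left interaction_tendsto)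
  then have interaction: "eventually (\<lambda>k. \<beta> * interaction n - \<delta>/4 < \<beta> * interaction (nk k)) sequentially"
    by (rule order_tendstoD(1)) (use \<open>0 < \<delta>\<close> in simp)
  have entropy: "eventually (\<lambda>k. entropy (n a) - \<delta>/4 < entropy (nk k a)) sequentially" for a
    using assms(2-4) \<open>0 < \<delta>\<close> by (intro entropy_eventually_gt profile_unit_valued) auto
  show "eventually (\<lambda>k. \<beta> * interaction n + (entropy (n A) + entropy (n B) + entropy (n C)) - \<delta>
      < \<beta> * interaction (nk k) + (entropy (nk k A) + entropy (nk k B) + entropy (nk k C))) sequentially"
    using interaction entropy[of A] entropy[of B] entropy[of C] by eventually_elim linarith
qed

end
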